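(* Assume (H1) and (H3). For any compact set $K\subset\mathbb R\setminus\{0\}$ there exist constants $c_K>0$ and $c_K'>0$ such that for every $n\geqslant1$, \[ \sup_{t\in K}\|\mathbf P_t^n\|_{\mathscr C\to\mathscr C}\leqslant c_Ke^{-c_K'n}. \]
   Context: $\mathbb X$ is a finite set, $\mathbf P$ a Markov transition matrix on $\mathbb X$, $f:\mathbb X\to\mathbb R$. $\mathscr C$ is the space of complex functions on $\mathbb X$ with $\|g\|_\infty=\max_x|g(x)|$, and for an operator $R$ on $\mathscr C$, $\|R\|_{\mathscr C\to\mathscr C}=\sup_{g\neq0}\|Rg\|_\infty/\|g\|_\infty$. (H1): there exists $k_0\geqslant1$ such that $\mathbf P^{k_0}g(x)>0$ for all $x$ and every non-negative, not identically zero $g$. (H3): for every $(\theta,a)\in\mathbb R^2$ there exist $n\geqslant0$ and $x_0,\dots,x_n$ with $\mathbf P(x_0,x_1)\cdots\mathbf P(x_{n-1},x_n)\mathbf P(x_n,x_0)>0$ and $f(x_0)+\dots+f(x_n)-(n+1)\theta\notin a\mathbb Z$. For $t\in\mathbb R$, $\mathbf P_tg(x)=\sum_{x'}e^{itf(x')}g(x')\mathbf P(x,x')$. *)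

theory Defs
  imports "HOL-Analysis.Analysis"
begin

definition markov_matrix :: "('x::finite \<Rightarrow> 'x \<Rightarrow> real) \<Rightarrow> bool" where
  "markov_matrix P \<longleftrightarrow> (\<forall>x y. 0 \<le> P x y) \<and> (\<forall>x. (\<Sum>y\<in>UNIV. P x y) = 1)"

definition markov_op :: "('x::finite \<Rightarrow> 'x \<Rightarrow> real) \<Rightarrow> ('x \<Rightarrow> real) \<Rightarrow> 'x \<Rightarrow> real" where
  "markov_op P g x = (\<Sum>x'\<in>UNIV. g x' * P x x')"

definition H1 :: "('x::finite \<Rightarrow> 'x \<Rightarrow> real) \<Rightarrow> bool" where
  "H1 P \<longleftrightarrow> (\<exists>k0::nat. k0 \<ge> 1 \<and>
     (\<forall>g::'x \<Rightarrow> real. (\<forall>x. 0 \<le> g x) \<and> (\<exists>x. g x \<noteq> 0) \<longrightarrow>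
        (\<forall>x. ((markov_op P ^^ k0) g) x > 0)))"

definition H3 :: "('x::finite \<Rightarrow> 'x \<Rightarrow> real) \<Rightarrow> ('x \<Rightarrow> real) \<Rightarrow> bool" where
  "H3 P f \<longleftrightarrow> (\<forall>\<theta> a::real. \<exists>(n::nat) (xs::nat \<Rightarrow> 'x).
     (\<Prod>i<n. P (xs i) (xs (Suc i))) * P (xs n) (xs 0) > 0 \<and>
     (\<Sum>i\<le>n. f (xs i)) - real (n + 1) * \<theta> \<notin> {a * of_int k | k. True})"

definition Pt :: "('x::finite \<Rightarrow> 'x \<Rightarrow> real) \<Rightarrow> ('x \<Rightarrow> real) \<Rightarrow> real
                  \<Rightarrow> ('x \<Rightarrow> complex) \<Rightarrow> 'x \<Rightarrow> complex" where
  "Pt P f t g x = (\<Sum>x'\<in>UNIV. exp (\<i> * complex_of_real (t * f x')) * g x' * complex_of_real (P x x'))"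

definition sup_norm :: "('x::finite \<Rightarrow> complex) \<Rightarrow> real" where
  "sup_norm g = Max (range (\<lambda>x. cmod (g x)))"

definition op_norm :: "(('x::finite \<Rightarrow> complex) \<Rightarrow> ('x \<Rightarrow> complex)) \<Rightarrow> real" where
  "op_norm R = (SUP g\<in>{g. \<exists>x. g x \<noteq> 0}. sup_norm (R g) / sup_norm g)"

end

theory Submission
  imports Defs
begin

(*
  Write Q_n(x, z) for the kernel of P_t^n, so |Q_n| <= P^n entrywise. Where equality holds
  no cancellation occurs among the paths from x to z, and the phases multiply along any
  intermediate state. By (H1), P^k > 0 for all k >= k0. If all loops at a state v were free
  of cancellation, their phases would be geometric, e^{i t theta l}, and routing through any
  cycle of P would force its phase to be e^{i t theta (n+1)}, contradicting (H3) with
  a = 2 pi / t. So some loop at v loses mass, hence so does every row of a fixed power of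
  P_t, whose sup-norm is then < 1. Continuity in t makes this uniform near t,
  submultiplicativity turns it into exponential decay, and compactness of K finishes.
*)

section \<open>Kernels on a finite set\<close>

definition kernel_mult :: "('x::finite \<Rightarrow> 'x \<Rightarrow> 'a::semiring_0) \<Rightarrow> ('x \<Rightarrow> 'x \<Rightarrow> 'a) \<Rightarrow> 'x \<Rightarrow> 'x \<Rightarrow> 'a"
  where "kernel_mult A B x z = (\<Sum>y\<in>UNIV. A x y * B y z)"

fun kernel_pow :: "('x::finite \<Rightarrow> 'x \<Rightarrow> 'a::semiring_1) \<Rightarrow> nat \<Rightarrow> 'x \<Rightarrow> 'x \<Rightarrow> 'a" where
  "kernel_pow A 0 = (\<lambda>x z. of_bool (x = z))"
| "kernel_pow A (Suc n) = kernel_mult A (kernel_pow A n)"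

definition kernel_op :: "('x::finite \<Rightarrow> 'x \<Rightarrow> 'a::semiring_0) \<Rightarrow> ('x \<Rightarrow> 'a) \<Rightarrow> 'x \<Rightarrow> 'a"
  where "kernel_op A g x = (\<Sum>y\<in>UNIV. A x y * g y)"

definition kernel_norm :: "('x::finite \<Rightarrow> 'x \<Rightarrow> 'a::real_normed_vector) \<Rightarrow> real"
  where "kernel_norm A = Max (range (\<lambda>x. \<Sum>z\<in>UNIV. norm (A x z)))"

lemma kernel_mult_assoc:
  "kernel_mult (kernel_mult A B) C = kernel_mult A (kernel_mult B C)"
proof (intro ext)
  fix x w
  have "kernel_mult (kernel_mult A B) C x w = (\<Sum>z\<in>UNIV. \<Sum>y\<in>UNIV. A x y * B y z * C z w)"
    by (simp add: kernel_mult_def sum_distrib_right)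
  also have "\<dots> = (\<Sum>y\<in>UNIV. \<Sum>z\<in>UNIV. A x y * (B y z * C z w))"
    by (subst sum.swap) (simp add: mult.assoc)
  also have "\<dots> = kernel_mult A (kernel_mult B C) x w"
    by (simp add: kernel_mult_def sum_distrib_left)
  finally show "kernel_mult (kernel_mult A B) C x w = kernel_mult A (kernel_mult B C) x w" .
qed

lemma kernel_mult_delta_left [simp]:
  fixes B :: "'x::finite \<Rightarrow> 'x \<Rightarrow> 'a::semiring_1"
  shows "kernel_mult (\<lambda>x z. of_bool (x = z)) B = B"
  by (intro ext) (simp add: kernel_mult_def)

lemma kernel_mult_delta_right [simp]:
  fixes A :: "'x::finite \<Rightarrow> 'x \<Rightarrow> 'a::semiring_1"
  shows "kernel_mult A (\<lambda>x z. of_bool (x = z)) = A"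
  by (intro ext) (simp add: kernel_mult_def)

lemma kernel_pow_add: "kernel_pow A (a + b) = kernel_mult (kernel_pow A a) (kernel_pow A b)"
  by (induction a) (simp_all add: kernel_mult_assoc)

lemma kernel_op_mult: "kernel_op A (kernel_op B g) = kernel_op (kernel_mult A B) g"
proof
  fix x
  have "kernel_op A (kernel_op B g) x = (\<Sum>y\<in>UNIV. \<Sum>z\<in>UNIV. A x y * (B y z * g z))"
    by (simp add: kernel_op_def sum_distrib_left)
  also have "\<dots> = (\<Sum>z\<in>UNIV. (\<Sum>y\<in>UNIV. A x y * B y z) * g z)"
    by (subst sum.swap) (simp add: sum_distrib_right mult.assoc)
  finally show "kernel_op A (kernel_op B g) x = kernel_op (kernel_mult A B) g x"
    by (simp add: kernel_op_def kernel_mult_def)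
qed

lemma funpow_kernel_op: "kernel_op A ^^ n = kernel_op (kernel_pow A n)"
proof (induction n)
  case 0
  show ?case by (simp add: fun_eq_iff kernel_op_def)
next
  case (Suc n)
  then show ?case by (simp add: comp_def kernel_op_mult)
qed

lemma row_norm_le_kernel_norm: "(\<Sum>z\<in>UNIV. norm (A x z)) \<le> kernel_norm A"
  by (simp add: kernel_norm_def)

lemma kernel_norm_le: "(\<And>x. (\<Sum>z\<in>UNIV. norm (A x z)) \<le> r) \<Longrightarrow> kernel_norm A \<le> r"
  by (simp add: kernel_norm_def)

lemma kernel_norm_less_iff: "kernel_norm A < r \<longleftrightarrow> (\<forall>x. (\<Sum>z\<in>UNIV. norm (A x z)) < r)"
  by (simp add: kernel_norm_def)

lemma kernel_norm_nonneg: "0 \<le> kernel_norm A"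
  by (rule order_trans[OF sum_nonneg row_norm_le_kernel_norm]) simp

lemma kernel_norm_mult_le:
  fixes A B :: "'x::finite \<Rightarrow> 'x \<Rightarrow> 'a::real_normed_algebra"
  shows "kernel_norm (kernel_mult A B) \<le> kernel_norm A * kernel_norm B"
proof (rule kernel_norm_le)
  fix x
  have "(\<Sum>z\<in>UNIV. norm (kernel_mult A B x z)) \<le> (\<Sum>z\<in>UNIV. \<Sum>y\<in>UNIV. norm (A x y) * norm (B y z))"
    unfolding kernel_mult_def
    by (intro sum_mono order_trans[OF norm_sum] norm_mult_ineq)
  also have "\<dots> = (\<Sum>y\<in>UNIV. norm (A x y) * (\<Sum>z\<in>UNIV. norm (B y z)))"
    by (subst sum.swap) (simp add: sum_distrib_left)
  also have "\<dots> \<le> (\<Sum>y\<in>UNIV. norm (A x y) * kernel_norm B)"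
    by (intro sum_mono mult_left_mono row_norm_le_kernel_norm) simp
  also have "\<dots> \<le> kernel_norm A * kernel_norm B"
    by (simp add: sum_distrib_right[symmetric] mult_right_mono kernel_norm_nonneg row_norm_le_kernel_norm)
  finally show "(\<Sum>z\<in>UNIV. norm (kernel_mult A B x z)) \<le> kernel_norm A * kernel_norm B" .
qed

lemma op_norm_kernel_op_le: "op_norm (kernel_op A) \<le> kernel_norm A"
  unfolding op_norm_def
proof (rule cSUP_least)
  show "{g::'a \<Rightarrow> complex. \<exists>x. g x \<noteq> 0} \<noteq> {}"
    by (auto intro!: exI[of _ "\<lambda>_. 1"])
next
  fix g :: "'a \<Rightarrow> complex"
  assume "g \<in> {g. \<exists>x. g x \<noteq> 0}"
  then obtain x0 where "g x0 \<noteq> 0" by auto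
  have "cmod (g x0) \<le> sup_norm g"
    by (simp add: sup_norm_def)
  with \<open>g x0 \<noteq> 0\<close> have g_pos: "0 < sup_norm g"
    by (meson less_le_trans zero_less_norm_iff)
  have "sup_norm (kernel_op A g) \<le> kernel_norm A * sup_norm g"
    unfolding sup_norm_def[of "kernel_op A g"]
  proof (intro Max.boundedI; clarsimp)
    fix x
    have "cmod (kernel_op A g x) \<le> (\<Sum>z\<in>UNIV. cmod (A x z) * sup_norm g)"
      unfolding kernel_op_def norm_mult[symmetric]
      by (intro order_trans[OF norm_sum] sum_mono)
         (simp add: norm_mult mult_left_mono sup_norm_def)
    also have "\<dots> \<le> kernel_norm A * sup_norm g"
      using g_pos by (simp add: sum_distrib_right[symmetric] row_norm_le_kernel_norm)
    finally show "cmod (kernel_op A g x) \<le> kernel_norm A * sup_norm g" .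
  qed
  then show "sup_norm (kernel_op A g) / sup_norm g \<le> kernel_norm A"
    using g_pos by (simp add: divide_le_eq)
qed

lemma norm_kernel_pow_le:
  fixes A :: "'x::finite \<Rightarrow> 'x \<Rightarrow> 'a::real_normed_algebra_1"
  assumes dominated: "\<And>x y. norm (A x y) \<le> B x y"
  shows "norm (kernel_pow A n x z) \<le> kernel_pow B n x z"
proof (induction n arbitrary: x)
  case 0
  show ?case by simp
next
  case (Suc n)
  have "norm (kernel_pow A (Suc n) x z) \<le> (\<Sum>y\<in>UNIV. norm (A x y) * norm (kernel_pow A n y z))"
    unfolding kernel_pow.simps kernel_mult_def
    by (intro order_trans[OF norm_sum] sum_mono norm_mult_ineq)
  also have "\<dots> \<le> (\<Sum>y\<in>UNIV. B x y * kernel_pow B n y z)"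
    by (intro sum_mono mult_mono dominated Suc.IH) (auto intro: order_trans[OF norm_ge_zero dominated])
  finally show ?case by (simp add: kernel_mult_def)
qed

lemma markov_matrix_kernel_mult:
  assumes "markov_matrix A" "markov_matrix B"
  shows "markov_matrix (kernel_mult A B)"
proof -
  have "(\<Sum>z\<in>UNIV. kernel_mult A B x z) = (\<Sum>y\<in>UNIV. A x y * (\<Sum>z\<in>UNIV. B y z))" for x
    by (simp add: kernel_mult_def sum_distrib_left) (rule sum.swap)
  with assms show ?thesis
    by (simp add: markov_matrix_def kernel_mult_def sum_nonneg)
qed

lemma markov_matrix_kernel_pow:
  assumes "markov_matrix P"
  shows "markov_matrix (kernel_pow P n)"
proof (induction n)
  case 0
  show ?case by (simp add: markov_matrix_def)
next
  case (Suc n)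
  then show ?case by (simp add: markov_matrix_kernel_mult assms)
qed

lemma markov_op_eq_kernel_op: "markov_op P = kernel_op P"
  by (simp add: fun_eq_iff markov_op_def kernel_op_def mult.commute)

lemma submultiplicative_exponential_decay:
  fixes a :: "nat \<Rightarrow> real"
  assumes submult: "\<And>i j. a (i + j) \<le> a i * a j"
    and nonneg: "\<And>n. 0 \<le> a n" and le_one: "\<And>n. a n \<le> 1"
    and "1 \<le> m" and "a m \<le> r" and "0 < r" and "r < 1"
  shows "a n \<le> (1 / r) * exp (- (- ln r / m) * n)"
proof -
  have pow: "a (q * m + j) \<le> r ^ q" for q j
  proof (induction q)
    case 0
    show ?case by (simp add: le_one)
  next
    case (Suc q)
    have "a (m + (q * m + j)) \<le> a m * a (q * m + j)" by (rule submult)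
    also have "\<dots> \<le> r * r ^ q"
      using Suc.IH \<open>a m \<le> r\<close> \<open>0 < r\<close> nonneg by (intro mult_mono) auto
    finally show ?case by (simp add: add.assoc)
  qed
  have "n < (n div m + 1) * m"
    using div_mult_mod_eq[of n m] mod_less_divisor[of m n] \<open>1 \<le> m\<close>
    unfolding distrib_right by linarith
  then have "real n < (real (n div m) + 1) * m"
    by (metis of_nat_1 of_nat_add of_nat_less_iff of_nat_mult)
  with \<open>1 \<le> m\<close> have "real n / m - 1 \<le> real (n div m)"
    by (simp add: field_simps)
  then have "ln r * real (n div m) \<le> ln r * (real n / m - 1)"
    using \<open>0 < r\<close> \<open>r < 1\<close> by (intro mult_left_mono_neg) auto
  moreover have "r ^ (n div m) = exp (ln r * real (n div m))"
    using \<open>0 < r\<close> by (metis exp_ln exp_of_nat_mult mult.commute)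
  ultimately have "r ^ (n div m) \<le> exp (ln r * (real n / m - 1))"
    by simp
  also have "\<dots> = (1 / r) * exp (- (- ln r / m) * n)"
    using \<open>0 < r\<close> by (simp add: exp_diff exp_minus field_simps)
  finally show ?thesis
    using pow[of "n div m" "n mod m"] by simp
qed

lemma compact_uniform_exponential_bound:
  fixes F :: "'a::topological_space \<Rightarrow> nat \<Rightarrow> real"
  assumes "compact K"
    and locally: "\<And>t. t \<in> K \<Longrightarrow> \<exists>U c c'. open U \<and> t \<in> U \<and> 0 < c \<and> 0 < c' \<and>
                   (\<forall>s\<in>U. \<forall>n. F s n \<le> c * exp (- c' * n))"
  shows "\<exists>c c'. 0 < c \<and> 0 < c' \<and> (\<forall>t\<in>K. \<forall>n. F t n \<le> c * exp (- c' * n))"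
proof -
  obtain U c c' where U: "\<And>t. t \<in> K \<Longrightarrow> open (U t) \<and> t \<in> U t \<and> 0 < c t \<and> 0 < c' t \<and>
                          (\<forall>s\<in>U t. \<forall>n. F s n \<le> c t * exp (- c' t * n))"
    using locally by metis
  obtain T where "T \<subseteq> K" "finite T" and cover: "K \<subseteq> (\<Union>t\<in>T. U t)"
    using compactE_image[OF \<open>compact K\<close>, of K U] U by blast
  define C where "C = Max (insert 1 (c ` T))"
  define C' where "C' = Min (insert 1 (c' ` T))"
  have "0 < C" by (simp add: C_def \<open>finite T\<close> Max_gr_iff)
  moreover have "0 < C'"
    using U \<open>T \<subseteq> K\<close> by (auto simp: C'_def \<open>finite T\<close> Min_gr_iff)
  moreover have "F s n \<le> C * exp (- C' * n)" if "s \<in> K" for s n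
  proof -
    obtain t where t: "t \<in> T" "s \<in> U t" using cover \<open>s \<in> K\<close> by blast
    with \<open>T \<subseteq> K\<close> have "F s n \<le> c t * exp (- c' t * n)" using U by blast
    also have "\<dots> \<le> C * exp (- C' * n)"
    proof (intro mult_mono)
      show "c t \<le> C" using t \<open>finite T\<close> by (simp add: C_def)
      have "C' \<le> c' t" using t \<open>finite T\<close> by (simp add: C'_def)
      then show "exp (- c' t * n) \<le> exp (- C' * n)" by (simp add: mult_right_mono)
    qed (use \<open>0 < C\<close> in auto)
    finally show ?thesis .
  qed
  ultimately show ?thesis by blast
qed

lemma norm_eq_bound_if_norm_sum_eq:
  fixes c :: "'a \<Rightarrow> 'b::real_normed_vector"
  assumes "finite A" and le: "\<And>w. w \<in> A \<Longrightarrow> norm (c w) \<le> r w"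
    and eq: "norm (sum c A) = sum r A" and "w \<in> A"
  shows "norm (c w) = r w"
proof -
  have "(\<Sum>w\<in>A. r w - norm (c w)) \<le> 0"
    using eq norm_sum[of c A] by (simp add: sum_subtractf)
  moreover have "0 \<le> (\<Sum>w\<in>A. r w - norm (c w))"
    using le by (simp add: sum_nonneg)
  ultimately have "\<forall>w\<in>A. r w - norm (c w) = 0"
    using le \<open>finite A\<close> by (subst sum_nonneg_eq_0_iff[symmetric]) auto
  with \<open>w \<in> A\<close> show ?thesis by simp
qed

lemma mult_eq_mult_of_bounds_imp_eq:
  fixes u v U V :: real
  assumes "0 \<le> u" "u \<le> U" "0 \<le> v" "v \<le> V" "0 < U" "0 < V" and "u * v = U * V"
  shows "u = U" and "v = V"
proof -
  have "U * V \<le> u * V"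
    using assms mult_left_mono[of v V u] by simp
  with assms show "u = U" by simp
  have "U * V \<le> U * v"
    using assms mult_right_mono[of u U v] by simp
  with assms show "v = V" by simp
qed

lemma sgn_eq_sgn_sum_if_norm_sum_eq:
  fixes c :: "'a \<Rightarrow> complex"
  assumes "finite A" and norm_eq: "norm (sum c A) = (\<Sum>w\<in>A. norm (c w))"
    and "y \<in> A" and "c y \<noteq> 0"
  shows "sgn (c y) = sgn (sum c A)"
proof -
  define s where "s = sum c A"
  have "(\<Sum>w\<in>A. Re (cnj s * c w)) = Re (cnj s * sum c A)"
    by (simp only: sum_distrib_left Re_sum)
  also have "\<dots> = Re (of_real ((norm s)\<^sup>2))"
    unfolding complex_norm_square s_def by (rule arg_cong[where f = Re], rule mult.commute)
  also have "\<dots> = (norm s)\<^sup>2"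
    by simp
  also have "\<dots> = (\<Sum>w\<in>A. norm s * norm (c w))"
    using norm_eq by (simp add: s_def power2_eq_square sum_distrib_left)
  finally have "(\<Sum>w\<in>A. norm s * norm (c w) - Re (cnj s * c w)) = 0"
    by (simp add: sum_subtractf)
  moreover have "Re (cnj s * c w) \<le> norm s * norm (c w)" for w
    by (metis complex_Re_le_cmod complex_mod_cnj norm_mult)
  ultimately have "norm (cnj s * c y) = Re (cnj s * c y)"
    using \<open>finite A\<close> \<open>y \<in> A\<close> by (simp add: sum_nonneg_eq_0_iff norm_mult)
  then have "cnj s * c y \<in> \<real>\<^sub>\<ge>\<^sub>0"
    by (simp only: norm_eq_Re_iff)
  then obtain r where r: "cnj s * c y = of_real r" "0 \<le> r"
    by (rule nonneg_Reals_cases)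
  have "norm (c y) \<le> norm s"
    unfolding s_def norm_eq by (rule member_le_sum) (simp_all add: \<open>y \<in> A\<close> \<open>finite A\<close>)
  with \<open>c y \<noteq> 0\<close> have "s \<noteq> 0" by auto
  have "of_real ((norm s)\<^sup>2) * c y = s * of_real r"
    unfolding complex_norm_square mult.assoc r(1) ..
  with \<open>s \<noteq> 0\<close> have cy: "c y = s * of_real (r / (norm s)\<^sup>2)"
    by (simp add: field_simps)
  with \<open>c y \<noteq> 0\<close> r(2) have "0 < r / (norm s)\<^sup>2"
    by (auto simp: less_le)
  then have "sgn (complex_of_real (r / (norm s)\<^sup>2)) = 1"
    unfolding sgn_of_real by (simp only: sgn_pos of_real_1)
  then show ?thesis
    unfolding s_def[symmetric] cy sgn_mult by simp
qed

lemma multiplicative_imp_geometric: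
  fixes G :: "nat \<Rightarrow> 'a::field"
  assumes mult: "\<And>a b. k \<le> a \<Longrightarrow> k \<le> b \<Longrightarrow> G (a + b) = G a * G b" and "G k \<noteq> 0"
  shows "\<exists>d. \<forall>l\<ge>k. G l = d ^ l"
proof (intro exI allI impI)
  define d where "d = G (Suc k) / G k"
  have step: "G (Suc l) = G l * d" if "k \<le> l" for l
  proof -
    have "G (Suc l) * G k = G l * G (Suc k)"
      using mult[of "Suc l" k] mult[of l "Suc k"] that by simp
    with \<open>G k \<noteq> 0\<close> show ?thesis by (simp add: d_def field_simps)
  qed
  have from_k: "G (k + j) = G k * d ^ j" for j
    by (induction j) (simp_all add: step)
  have "G k * G k = G k * d ^ k"
    using mult[of k k] from_k[of k] by (metis order_refl)
  with \<open>G k \<noteq> 0\<close> have "G k = d ^ k" by simp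
  show "G l = d ^ l" if "k \<le> l" for l
    using from_k[of "l - k"] that \<open>G k = d ^ k\<close> by (simp add: power_add[symmetric])
qed

section \<open>The twisted kernel\<close>

lemma H3_closed_path:
  assumes "markov_matrix P" "H3 P f"
  obtains ys L where "ys L = ys 0" "\<And>i. i < L \<Longrightarrow> 0 < P (ys i) (ys (Suc i))"
    "(\<Sum>i<L. f (ys (Suc i))) - real L * \<theta> \<notin> {a * of_int k | k. True}"
proof -
  obtain n xs where cycle: "0 < (\<Prod>i<n. P (xs i) (xs (Suc i))) * P (xs n) (xs 0)"
    and S: "(\<Sum>i\<le>n. f (xs i)) - real (n + 1) * \<theta> \<notin> {a * of_int k | k. True}"
    using \<open>H3 P f\<close> unfolding H3_def by blast
  define ys where "ys i = (if i \<le> n then xs i else xs 0)" for i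
  have "(\<Prod>i<Suc n. P (ys i) (ys (Suc i))) = (\<Prod>i<n. P (xs i) (xs (Suc i))) * P (xs n) (xs 0)"
    by (simp add: ys_def)
  with cycle have "(\<Prod>i<Suc n. P (ys i) (ys (Suc i))) \<noteq> 0"
    by linarith
  then have steps: "0 < P (ys i) (ys (Suc i))" if "i < Suc n" for i
    using that \<open>markov_matrix P\<close> by (auto simp: markov_matrix_def less_le)
  have "(\<Sum>i<Suc n. f (ys (Suc i))) = (\<Sum>i<n. f (xs (Suc i))) + f (xs 0)"
    by (auto simp: ys_def intro!: sum.cong)
  also have "\<dots> = (\<Sum>i\<le>n. f (xs i))"
    unfolding lessThan_Suc_atMost[symmetric] sum.lessThan_Suc_shift by simp
  finally show thesis
    using S steps by (intro that[where L = "Suc n" and ys = ys]) (simp_all add: ys_def)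
qed

lemma imag_exp_eq_power_imp_lattice:
  assumes "t \<noteq> 0" and "exp (\<i> * of_real (t * S)) = exp (\<i> * of_real (t * \<theta>)) ^ L"
  shows "S - real L * \<theta> \<in> {(2 * pi / t) * of_int k | k. True}"
proof -
  have "exp (\<i> * of_real (t * S)) = exp (of_nat L * (\<i> * of_real (t * \<theta>)))"
    using assms(2) by (simp add: exp_of_nat_mult)
  then obtain k :: int where "\<i> * of_real (t * S) = of_nat L * (\<i> * of_real (t * \<theta>)) + of_int (2 * k) * pi * \<i>"
    unfolding exp_eq by blast
  from arg_cong[where f = Im, OF this] have "t * S = real L * (t * \<theta>) + 2 * pi * k"
    by simp
  with \<open>t \<noteq> 0\<close> have "S - real L * \<theta> = (2 * pi / t) * of_int k"
    by (simp add: field_simps)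
  then show ?thesis by blast
qed

locale twisted_markov_chain =
  fixes P :: "'x::finite \<Rightarrow> 'x \<Rightarrow> real" and f :: "'x \<Rightarrow> real"
  assumes markov: "markov_matrix P"
begin

definition twist :: "real \<Rightarrow> 'x \<Rightarrow> 'x \<Rightarrow> complex"
  where "twist t x y = exp (\<i> * of_real (t * f y)) * of_real (P x y)"

abbreviation P_pow :: "nat \<Rightarrow> 'x \<Rightarrow> 'x \<Rightarrow> real"
  where "P_pow \<equiv> kernel_pow P"

abbreviation twist_pow :: "real \<Rightarrow> nat \<Rightarrow> 'x \<Rightarrow> 'x \<Rightarrow> complex"
  where "twist_pow t \<equiv> kernel_pow (twist t)"

text \<open>No cancellation in the entry: all paths from \<open>x\<close> to \<open>z\<close> of length \<open>n\<close> carry the same phase.\<close>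

definition aligned :: "real \<Rightarrow> nat \<Rightarrow> 'x \<Rightarrow> 'x \<Rightarrow> bool"
  where "aligned t n x z \<longleftrightarrow> norm (twist_pow t n x z) = P_pow n x z"

lemma Pt_eq_kernel_op: "Pt P f t = kernel_op (twist t)"
  by (simp add: fun_eq_iff Pt_def kernel_op_def twist_def mult_ac)

lemma norm_twist [simp]: "norm (twist t x y) = P x y"
  using markov by (simp add: twist_def norm_mult markov_matrix_def)

lemma sgn_twist: "0 < P x y \<Longrightarrow> sgn (twist t x y) = exp (\<i> * of_real (t * f y))"
  unfolding twist_def sgn_mult sgn_of_real sgn_eq[of "exp _"] norm_exp_i_times by simp

lemma P_pow_nonneg: "0 \<le> P_pow n x z"
  using markov_matrix_kernel_pow[OF markov] by (simp add: markov_matrix_def)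

lemma P_pow_mult_le: "P_pow a x y * P_pow b y z \<le> P_pow (a + b) x z"
  unfolding kernel_pow_add kernel_mult_def
  by (intro member_le_sum mult_nonneg_nonneg P_pow_nonneg) simp_all

lemma H1_imp_P_pow_pos:
  assumes "H1 P"
  obtains k0 where "1 \<le> k0" "\<And>k x z. k0 \<le> k \<Longrightarrow> 0 < P_pow k x z"
proof -
  obtain k0 where "1 \<le> k0" and irreducible:
    "\<And>g::'x \<Rightarrow> real. (\<forall>x. 0 \<le> g x) \<and> (\<exists>x. g x \<noteq> 0) \<Longrightarrow> \<forall>x. 0 < (markov_op P ^^ k0) g x"
    using \<open>H1 P\<close> unfolding H1_def by blast
  have pos_k0: "0 < P_pow k0 y z" for y z
    using irreducible[of "\<lambda>w. of_bool (w = z)"]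
    by (auto simp: markov_op_eq_kernel_op funpow_kernel_op kernel_op_def)
  have "0 < P_pow k x z" if "k0 \<le> k" for k x z
  proof -
    have "(\<Sum>y\<in>UNIV. P_pow (k - k0) x y) = 1"
      using markov_matrix_kernel_pow[OF markov] by (simp add: markov_matrix_def)
    then obtain y where "P_pow (k - k0) x y \<noteq> 0"
      by (metis sum.neutral zero_neq_one)
    then have "0 < P_pow (k - k0) x y * P_pow k0 y z"
      using pos_k0 P_pow_nonneg by (simp add: less_le)
    also have "\<dots> \<le> P_pow k x z"
      using P_pow_mult_le[of "k - k0" x y k0 z] that by simp
    finally show ?thesis .
  qed
  with \<open>1 \<le> k0\<close> show thesis by (rule that)
qed

lemma norm_twist_pow_le: "norm (twist_pow t n x z) \<le> P_pow n x z"
  by (rule norm_kernel_pow_le) simp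

lemma kernel_norm_twist_pow_le_1: "kernel_norm (twist_pow t n) \<le> 1"
proof (rule kernel_norm_le)
  fix x
  have "(\<Sum>z\<in>UNIV. norm (twist_pow t n x z)) \<le> (\<Sum>z\<in>UNIV. P_pow n x z)"
    by (intro sum_mono norm_twist_pow_le)
  also have "\<dots> = 1"
    using markov_matrix_kernel_pow[OF markov] by (simp add: markov_matrix_def)
  finally show "(\<Sum>z\<in>UNIV. norm (twist_pow t n x z)) \<le> 1" .
qed

lemma isCont_twist_pow: "isCont (\<lambda>s. twist_pow s n x z) t"
  by (induction n arbitrary: x) (auto simp: kernel_mult_def twist_def intro!: continuous_intros)

lemma aligned_split:
  assumes "aligned t (a + b) x z" and "0 < P_pow a x y" and "0 < P_pow b y z"
  shows "aligned t a x y" "aligned t b y z"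
    and "sgn (twist_pow t (a + b) x z) = sgn (twist_pow t a x y) * sgn (twist_pow t b y z)"
proof -
  define c where "c w = twist_pow t a x w * twist_pow t b w z" for w
  have sum_c: "twist_pow t (a + b) x z = sum c UNIV"
    by (simp add: c_def kernel_pow_add kernel_mult_def)
  have c_le: "norm (c w) \<le> P_pow a x w * P_pow b w z" for w
    unfolding c_def norm_mult by (intro mult_mono norm_twist_pow_le P_pow_nonneg norm_ge_zero)
  have "norm (sum c UNIV) = (\<Sum>w\<in>UNIV. P_pow a x w * P_pow b w z)"
    using assms(1) unfolding aligned_def sum_c by (simp add: kernel_pow_add kernel_mult_def)
  then have norm_c: "norm (c w) = P_pow a x w * P_pow b w z" for w
    using norm_eq_bound_if_norm_sum_eq[of UNIV c "\<lambda>w. P_pow a x w * P_pow b w z"] c_le by simp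
  have "norm (twist_pow t a x y) = P_pow a x y" "norm (twist_pow t b y z) = P_pow b y z"
    using mult_eq_mult_of_bounds_imp_eq[OF _ norm_twist_pow_le _ norm_twist_pow_le assms(2,3)] norm_c[of y]
    by (simp_all add: c_def norm_mult)
  then show "aligned t a x y" "aligned t b y z"
    by (simp_all add: aligned_def)
  have "norm (sum c UNIV) = (\<Sum>w\<in>UNIV. norm (c w))"
    using \<open>norm (sum c UNIV) = _\<close> norm_c by simp
  moreover have "c y \<noteq> 0"
    using norm_c[of y] assms(2,3) by auto
  ultimately show "sgn (twist_pow t (a + b) x z) = sgn (twist_pow t a x y) * sgn (twist_pow t b y z)"
    using sgn_eq_sgn_sum_if_norm_sum_eq[of UNIV c y] by (simp add: sum_c c_def sgn_mult)
qed

lemma aligned_sgn_nonzero: "aligned t n x z \<Longrightarrow> 0 < P_pow n x z \<Longrightarrow> sgn (twist_pow t n x z) \<noteq> 0"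
  by (auto simp: aligned_def sgn_zero_iff)

lemma misaligned_propagates:
  assumes "\<not> aligned t b y z" and "0 < P_pow a x y"
  shows "\<not> aligned t (a + b) x z"
proof
  assume "aligned t (a + b) x z"
  have "0 < P_pow b y z"
    using assms(1) norm_twist_pow_le[of t b y z] norm_ge_zero[of "twist_pow t b y z"]
    unfolding aligned_def by linarith
  with aligned_split(2)[OF \<open>aligned t (a + b) x z\<close> assms(2)] assms(1) show False
    by blast
qed

lemma P_pow_path_pos:
  assumes "\<And>i. i < n \<Longrightarrow> 0 < P (xs i) (xs (Suc i))"
  shows "0 < P_pow n (xs 0) (xs n)"
  using assms
proof (induction n)
  case 0
  show ?case by simp
next
  case (Suc n)
  then have "0 < P_pow n (xs 0) (xs n) * P_pow 1 (xs n) (xs (Suc n))"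
    by simp
  also have "\<dots> \<le> P_pow (Suc n) (xs 0) (xs (Suc n))"
    using P_pow_mult_le[of n _ _ 1] by simp
  finally show ?case .
qed

lemma sgn_twist_pow_path:
  assumes "\<And>i. i < n \<Longrightarrow> 0 < P (xs i) (xs (Suc i))" and "aligned t n (xs 0) (xs n)"
  shows "sgn (twist_pow t n (xs 0) (xs n)) = exp (\<i> * of_real (t * (\<Sum>i<n. f (xs (Suc i)))))"
  using assms
proof (induction n)
  case 0
  show ?case by simp
next
  case (Suc n)
  have path: "0 < P_pow n (xs 0) (xs n)" and step: "0 < P_pow 1 (xs n) (xs (Suc n))"
    using P_pow_path_pos[of n xs] Suc.prems(1) by simp_all
  note split = aligned_split[of t n 1 "xs 0" "xs (Suc n)", OF _ path step]
  have "sgn (twist_pow t (Suc n) (xs 0) (xs (Suc n)))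
      = exp (\<i> * of_real (t * (\<Sum>i<n. f (xs (Suc i))))) * exp (\<i> * of_real (t * f (xs (Suc n))))"
    using split Suc by (simp add: sgn_twist)
  also have "\<dots> = exp (\<i> * of_real (t * (\<Sum>i<Suc n. f (xs (Suc i)))))"
    by (simp add: exp_add[symmetric] distrib_left)
  finally show ?case .
qed

lemma cycle_phase:
  assumes pos: "\<And>k x z. k0 \<le> k \<Longrightarrow> 0 < P_pow k x z"
    and loops: "\<And>l. aligned t l v v" and geometric: "\<And>l. k0 \<le> l \<Longrightarrow> sgn (twist_pow t l v v) = d ^ l"
    and cycle: "0 < P_pow L x x"
  shows "aligned t L x x" and "sgn (twist_pow t L x x) = d ^ L"
proof -
  txt \<open>Compare the loops \<open>v \<rightarrow> x \<rightarrow> v\<close> and \<open>v \<rightarrow> x \<rightarrow> x \<rightarrow> v\<close>, the latter running once around the cycle.\<close>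
  define \<alpha> where "\<alpha> = sgn (twist_pow t k0 v x)"
  define \<beta> where "\<beta> = sgn (twist_pow t k0 x v)"
  have out_and_back: "aligned t (L + k0) x v" "d ^ (k0 + (L + k0)) = \<alpha> * sgn (twist_pow t (L + k0) x v)"
    using aligned_split[OF loops pos pos, of k0 "L + k0" x] geometric[of "k0 + (L + k0)"]
    by (simp_all add: \<alpha>_def)
  show "aligned t L x x"
    using aligned_split(1)[OF out_and_back(1) cycle pos] by simp
  have around: "sgn (twist_pow t (L + k0) x v) = sgn (twist_pow t L x x) * \<beta>"
    and "aligned t k0 x v"
    using aligned_split(2,3)[OF out_and_back(1) cycle pos] by (simp_all add: \<beta>_def)
  have "d ^ (k0 + k0) = \<alpha> * \<beta>" and "aligned t k0 v x"
    using aligned_split[OF loops pos pos, of k0 k0 x] geometric[of "k0 + k0"]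
    by (simp_all add: \<alpha>_def \<beta>_def)
  then have "sgn (twist_pow t L x x) * (\<alpha> * \<beta>) = d ^ L * (\<alpha> * \<beta>)"
    using out_and_back(2) around by (auto simp: power_add mult_ac)
  moreover have "\<alpha> \<noteq> 0" "\<beta> \<noteq> 0"
    using aligned_sgn_nonzero \<open>aligned t k0 v x\<close> \<open>aligned t k0 x v\<close> pos
    by (simp_all add: \<alpha>_def \<beta>_def)
  ultimately show "sgn (twist_pow t L x x) = d ^ L"
    by simp
qed

lemma aligned_loops_phase:
  assumes "1 \<le> k0" and pos: "\<And>k x z. k0 \<le> k \<Longrightarrow> 0 < P_pow k x z"
    and loops: "\<And>l. aligned t l v v" and "t \<noteq> 0"
  obtains \<theta> where "\<And>l. k0 \<le> l \<Longrightarrow> sgn (twist_pow t l v v) = exp (\<i> * of_real (t * \<theta>)) ^ l"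
proof -
  have "\<exists>d. \<forall>l\<ge>k0. sgn (twist_pow t l v v) = d ^ l"
    using aligned_split(3)[OF loops pos pos] aligned_sgn_nonzero[OF loops pos]
    by (intro multiplicative_imp_geometric) auto
  then obtain d where geometric: "\<And>l. k0 \<le> l \<Longrightarrow> sgn (twist_pow t l v v) = d ^ l"
    by blast
  have "twist_pow t k0 v v \<noteq> 0"
    using aligned_sgn_nonzero[OF loops pos[of k0]] by (simp add: sgn_zero_iff)
  then have "norm d ^ k0 = 1"
    using geometric[of k0] norm_sgn[of "twist_pow t k0 v v"] by (simp add: norm_power)
  with \<open>1 \<le> k0\<close> have "norm d = 1"
    using power_eq_1_iff[of "norm d" k0] by simp
  then have "d \<noteq> 0"
    by auto
  with \<open>norm d = 1\<close> have "cis (Arg d) = d"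
    by (simp add: cis_Arg sgn_div_norm)
  moreover have "t * (Arg d / t) = Arg d"
    using \<open>t \<noteq> 0\<close> by simp
  ultimately have "d = exp (\<i> * of_real (t * (Arg d / t)))"
    by (metis cis_conv_exp)
  with geometric show thesis
    by (intro that[of "Arg d / t"]) simp
qed

lemma exists_misaligned_loop:
  assumes "H1 P" and "H3 P f" and "t \<noteq> 0"
  shows "\<exists>l. \<not> aligned t l v v"
proof (rule ccontr)
  assume "\<not> ?thesis"
  then have loops: "\<And>l. aligned t l v v" by blast
  obtain k0 where "1 \<le> k0" and pos: "\<And>k x z. k0 \<le> k \<Longrightarrow> 0 < P_pow k x z"
    using H1_imp_P_pow_pos[OF \<open>H1 P\<close>] by blast
  obtain \<theta> where geometric: "\<And>l. k0 \<le> l \<Longrightarrow> sgn (twist_pow t l v v) = exp (\<i> * of_real (t * \<theta>)) ^ l"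
    using aligned_loops_phase[OF \<open>1 \<le> k0\<close> pos loops \<open>t \<noteq> 0\<close>] by blast
  obtain ys L where closed: "ys L = ys 0" and steps: "\<And>i. i < L \<Longrightarrow> 0 < P (ys i) (ys (Suc i))"
    and not_in_lattice: "(\<Sum>i<L. f (ys (Suc i))) - real L * \<theta> \<notin> {(2 * pi / t) * of_int k | k. True}"
    by (rule H3_closed_path[OF markov \<open>H3 P f\<close>, where \<theta> = \<theta> and a = "2 * pi / t"]) (rule that)
  have "0 < P_pow L (ys 0) (ys 0)"
    using P_pow_path_pos[of L ys, OF steps] closed by simp
  note cycle = cycle_phase[OF pos loops geometric this]
  have "exp (\<i> * of_real (t * (\<Sum>i<L. f (ys (Suc i))))) = exp (\<i> * of_real (t * \<theta>)) ^ L"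
    using sgn_twist_pow_path[of L ys, OF steps] cycle closed by simp
  from imag_exp_eq_power_imp_lattice[OF \<open>t \<noteq> 0\<close> this] not_in_lattice show False
    by contradiction
qed

lemma twist_pow_contracts:
  assumes "H1 P" and "H3 P f" and "t \<noteq> 0"
  obtains m where "1 \<le> m" and "kernel_norm (twist_pow t m) < 1"
proof -
  obtain k0 where "1 \<le> k0" and pos: "\<And>k x z. k0 \<le> k \<Longrightarrow> 0 < P_pow k x z"
    using H1_imp_P_pow_pos[OF \<open>H1 P\<close>] by blast
  txt \<open>Every state reaches \<open>v\<close> in \<open>k0\<close> steps, so one misaligned loop at \<open>v\<close> makes every row lose mass.\<close>
  fix v
  obtain l where misaligned: "\<not> aligned t l v v"
    using exists_misaligned_loop[OF assms] by blast
  have "kernel_norm (twist_pow t (k0 + l)) < 1"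
    unfolding kernel_norm_less_iff
  proof
    fix x
    have "\<not> aligned t (k0 + l) x v"
      using misaligned_propagates[OF misaligned pos[of k0 x v]] by simp
    then have strict: "norm (twist_pow t (k0 + l) x v) < P_pow (k0 + l) x v"
      using norm_twist_pow_le[of t "k0 + l" x v] by (simp add: aligned_def)
    have "(\<Sum>z\<in>UNIV. norm (twist_pow t (k0 + l) x z)) < (\<Sum>z\<in>UNIV. P_pow (k0 + l) x z)"
      using strict norm_twist_pow_le by (intro sum_strict_mono_ex1) auto
    also have "\<dots> = 1"
      using markov_matrix_kernel_pow[OF markov] by (simp add: markov_matrix_def)
    finally show "(\<Sum>z\<in>UNIV. norm (twist_pow t (k0 + l) x z)) < 1" .
  qed
  with \<open>1 \<le> k0\<close> show thesis
    by (intro that[of "k0 + l"]) simp_all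
qed

lemma local_exponential_decay:
  assumes "H1 P" and "H3 P f" and "t \<noteq> 0"
  shows "\<exists>U c c'. open U \<and> t \<in> U \<and> 0 < c \<and> 0 < c' \<and>
           (\<forall>s\<in>U. \<forall>n. kernel_norm (twist_pow s n) \<le> c * exp (- c' * n))"
proof -
  obtain m where "1 \<le> m" and contracts: "kernel_norm (twist_pow t m) < 1"
    by (rule twist_pow_contracts[OF assms])
  define r where "r = (1 + kernel_norm (twist_pow t m)) / 2"
  have "0 < r" "r < 1"
    using contracts kernel_norm_nonneg[of "twist_pow t m"] by (simp_all add: r_def)
  have "\<forall>\<^sub>F s in nhds t. (\<Sum>z\<in>UNIV. norm (twist_pow s m x z)) < r" for x
  proof (rule order_tendstoD(2))
    show "((\<lambda>s. \<Sum>z\<in>UNIV. norm (twist_pow s m x z)) \<longlongrightarrow> (\<Sum>z\<in>UNIV. norm (twist_pow t m x z))) (nhds t)"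
      using isCont_twist_pow[where n = m and x = x and t = t]
      by (intro tendsto_intros) (metis isCont_def tendsto_at_iff_tendsto_nhds)
    show "(\<Sum>z\<in>UNIV. norm (twist_pow t m x z)) < r"
      using row_norm_le_kernel_norm[of "twist_pow t m" x] contracts by (simp add: r_def)
  qed
  then have "\<forall>\<^sub>F s in nhds t. kernel_norm (twist_pow s m) < r"
    unfolding kernel_norm_less_iff by (simp add: eventually_all_finite)
  then obtain U where "open U" "t \<in> U" and U: "\<And>s. s \<in> U \<Longrightarrow> kernel_norm (twist_pow s m) < r"
    unfolding eventually_nhds by blast
  have "kernel_norm (twist_pow s n) \<le> (1 / r) * exp (- (- ln r / m) * n)" if "s \<in> U" for s n
  proof (rule submultiplicative_exponential_decay)
    show "kernel_norm (twist_pow s (i + j)) \<le> kernel_norm (twist_pow s i) * kernel_norm (twist_pow s j)" for i j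
      unfolding kernel_pow_add by (rule kernel_norm_mult_le)
  qed (use \<open>1 \<le> m\<close> \<open>0 < r\<close> \<open>r < 1\<close> U[OF that] in
       \<open>simp_all add: kernel_norm_nonneg kernel_norm_twist_pow_le_1 less_imp_le\<close>)
  moreover have "0 < - ln r / m"
    using \<open>1 \<le> m\<close> \<open>0 < r\<close> \<open>r < 1\<close> by (simp add: divide_neg_pos)
  ultimately show ?thesis
    using \<open>open U\<close> \<open>t \<in> U\<close> \<open>0 < r\<close> by (intro exI[of _ U] exI[of _ "1 / r"] exI[of _ "- ln r / m"]) auto
qed

end

theorem lemma4p2:
  fixes P :: "'x::finite \<Rightarrow> 'x \<Rightarrow> real" and f :: "'x \<Rightarrow> real" and K :: "real set"
  assumes "markov_matrix P"
    and "H1 P"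
    and "H3 P f"
    and "compact K" and "0 \<notin> K"
  shows "\<exists>c c'. c > 0 \<and> c' > 0 \<and>
           (\<forall>n::nat. n \<ge> 1 \<longrightarrow>
              (\<forall>t\<in>K. op_norm (Pt P f t ^^ n) \<le> c * exp (- c' * real n)))"
proof -
  interpret twisted_markov_chain P f
    by unfold_locales fact
  have "\<exists>c c'. 0 < c \<and> 0 < c' \<and> (\<forall>t\<in>K. \<forall>n. kernel_norm (twist_pow t n) \<le> c * exp (- c' * n))"
    using local_exponential_decay[OF \<open>H1 P\<close> \<open>H3 P f\<close>] \<open>0 \<notin> K\<close>
    by (intro compact_uniform_exponential_bound[OF \<open>compact K\<close>]) metis
  then obtain c c' where "0 < c" "0 < c'"
    and bound: "\<And>t n. t \<in> K \<Longrightarrow> kernel_norm (twist_pow t n) \<le> c * exp (- c' * n)"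
    by blast
  have "op_norm (Pt P f t ^^ n) \<le> c * exp (- c' * n)" if "t \<in> K" for t n
    unfolding Pt_eq_kernel_op funpow_kernel_op
    using op_norm_kernel_op_le bound[OF that] by (rule order_trans)
  with \<open>0 < c\<close> \<open>0 < c'\<close> show ?thesis
    by blast
qed

end
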